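(* Let $N>0$ be an integer and $z$ a nonzero complex number (or indeterminate). Let $X,Y,Z$ be formal variables and let $\alpha,\beta$ satisfy $\alpha+\beta=X+Y$, $\alpha\beta=Z$. Then, as formal power series in $X,Y,Z$, \[ \Phi_0^{(N)}(X,Y,Z;z)=\frac{1}{Z-XY} \left\{{}_{2}F_{1}^{(N)}\left(\begin{matrix}\alpha-X,\beta-X\\ 1-X\end{matrix};z\right)-1\right\}, \] where the right-hand side is understood as follows: each term with $m\ge1$ of ${}_{2}F_{1}^{(N)}$ contains the factor $(\alpha-X)(\beta-X)=Z-XY$, so the division is exact, the result is symmetric in $\alpha,\beta$ and hence expressible in $X,Y,Z$, and $1/(1-X)_m$ is expanded as a power series in $X$.
   Context: $(x)_m=x(x+1)\cdots(x+m-1)$ is the rising factorial, $(x)_0=1$. For integers $N>0$, define \[ {}_{2}F_{1}^{(N)}\left(\begin{matrix}a,b\\ c\end{matrix};z\right)=\sum_{m=0}^{N-1}\frac{(a)_m(b)_m}{(c)_m\, m!}\,\frac{(N-m)_m}{(Nz^{-1}-m)_m}. \] For ${\boldsymbol{k}}=(k_1,\ldots,k_r)\in\mathbb{Z}_{>0}^r$ define the truncated multiple polylogarithm \[ \mathrm{Li}_{\boldsymbol{k}}^{(N)}(z)=\sum_{0<m_1<\cdots<m_r<N}\frac{1}{m_1^{k_1}\cdots m_r^{k_r}}\frac{(N-m_r)_{m_r}}{(Nz^{-1}-m_r)_{m_r}}. \] For integers $k,r,h>0$ let $I_0(k,r,h)$ be the set of $(k_1,\ldots,k_r)\in\mathbb{Z}_{>0}^r$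 with $k_r>1$, $k_1+\cdots+k_r=k$ and $\#\{i\mid k_i>1\}=h$ (a finite set). Put $G_0^{(N)}(k,r,h;z)=\sum_{{\boldsymbol{k}}\in I_0(k,r,h)}\mathrm{Li}^{(N)}_{\boldsymbol{k}}(z)$ and \[ \Phi_0^{(N)}(X,Y,Z;z)=\sum_{k,r,h>0}G^{(N)}_0(k,r,h;z)\,X^{k-r-h}Y^{r-h}Z^{h-1}. \] *)

theory Defs
  imports "HOL-Computational_Algebra.Formal_Power_Series"
begin

text \<open>Formal power series in three variables X, Y, Z over the complex numbers,
  realised as nested one-variable series: the innermost variable is X, then Y,
  the outermost is Z.  The coefficient of X^a Y^b Z^c of f is
  fps_nth (fps_nth (fps_nth f c) b) a.\<close>

type_synonym mps = "complex fps fps fps"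

definition mX :: mps where "mX = fps_const (fps_const fps_X)"
definition mY :: mps where "mY = fps_const fps_X"
definition mZ :: mps where "mZ = fps_X"

definition embX :: "complex fps \<Rightarrow> mps" where "embX f = fps_const (fps_const f)"

definition cfac :: "nat \<Rightarrow> nat \<Rightarrow> complex \<Rightarrow> complex" where
  "cfac N m z = pochhammer (of_nat N - of_nat m) m / pochhammer (of_nat N / z - of_nat m) m"

definition LiN :: "nat \<Rightarrow> nat list \<Rightarrow> complex \<Rightarrow> complex" where
  "LiN N ks z = (\<Sum>ms\<in>{ms. length ms = length ks \<and> sorted_wrt (<) ms \<and> set ms \<subseteq> {0<..<N}}.
       (\<Prod>i<length ks. 1 / (of_nat (ms!i) ^ (ks!i))) * cfac N (last ms) z)"

definition I0 :: "nat \<Rightarrow> nat \<Rightarrow> nat \<Rightarrow> nat list set" where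
  "I0 k r h = {ks. length ks = r \<and> (\<forall>i<r. ks!i > 0) \<and> ks!(r-1) > 1 \<and> sum_list ks = k
                  \<and> card {i. i < r \<and> ks!i > 1} = h}"

definition G0 :: "nat \<Rightarrow> nat \<Rightarrow> nat \<Rightarrow> nat \<Rightarrow> complex \<Rightarrow> complex" where
  "G0 N k r h z = (\<Sum>ks\<in>I0 k r h. LiN N ks z)"

definition Phi0 :: "nat \<Rightarrow> complex \<Rightarrow> mps" where
  "Phi0 N z = Abs_fps (\<lambda>c. Abs_fps (\<lambda>b. Abs_fps (\<lambda>a.
      \<Sum>(k,r,h)\<in>{(k,r,h). k > 0 \<and> r > 0 \<and> h > 0 \<and> int k - int r - int h = int a
                  \<and> int r - int h = int b \<and> int h - 1 = int c}. G0 N k r h z)))"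

text \<open>With \<alpha> + \<beta> = X+Y and \<alpha>\<beta> = Z one has
  (\<alpha>-X)_m (\<beta>-X)_m = \<Prod>j<m. (\<alpha>-X+j)(\<beta>-X+j)
                    = \<Prod>j<m. (\<alpha>\<beta> + (j-X)(\<alpha>+\<beta>) + (j-X)^2).
  This is the symmetric expression written in terms of e1 = X+Y and e2 = Z.\<close>
definition ab_poch :: "nat \<Rightarrow> mps" where
  "ab_poch m = (\<Prod>j<m. mZ + (of_nat j - mX) * (mX + mY) + (of_nat j - mX)^2)"

text \<open>The truncated hypergeometric sum 2F1^{(N)}(\<alpha>-X, \<beta>-X; 1-X; z), with
  1/(1-X)_m expanded as a power series in X.\<close>
definition F21N :: "nat \<Rightarrow> complex \<Rightarrow> mps" where
  "F21N N z = (\<Sum>m<N. ab_poch m *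
      embX (inverse (pochhammer (1 - fps_X) m * fps_const (fact m)) * fps_const (cfac N m z)))"

end

theory Submission
  imports Defs
begin

text \<open>Splitting Li^(N)_k according to its largest summation index j leaves the truncated multiple
  zeta value zeta_{<j}(k_1, ..., k_{r-1}). Weighting 1/i^k by Y for k = 1 and by Z X^(k-2) for k >= 2,
  the generating series of all zeta_{<j}(k) is the finite product
  Q_j = prod_{0<i<j} (1 + Y/i + Z/(i(i-X))), so Phi_0 = sum_{0<j<N} c_j Q_j / (j(j-X)) with
  c_j = (N-j)_j / (N/z-j)_j. Now (1 + Y/i + Z/(i(i-X))) i(i-X) = (alpha-X+i)(beta-X+i), the factor
  for i = 0 is Z - XY, and prod_{0<i<=j} i(i-X) = (1-X)_j j!; hence (Z - XY) Q_j / (j(j-X)) is the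
  j-th term of 2F1^(N).\<close>

unbundle fps_syntax

section \<open>Clearing the denominators of the product\<close>

abbreviation mconst :: "complex \<Rightarrow> mps" where
  "mconst d \<equiv> fps_const (fps_const (fps_const d))"

lemma embX_mult: "embX (f * g) = embX f * embX g" by (simp add: embX_def)
lemma embX_diff: "embX (f - g) = embX f - embX g" by (simp add: embX_def)
lemma embX_1: "embX 1 = 1" by (simp add: embX_def)
lemma embX_const: "embX (fps_const d) = mconst d" by (simp add: embX_def)
lemma embX_X: "embX fps_X = mX" by (simp add: embX_def mX_def)

lemma embX_prod: "embX (prod f A) = (\<Prod>i\<in>A. embX (f i))"
  by (induction A rule: infinite_finite_induct) (auto simp: embX_1 embX_mult)

definition lin_fac :: "nat \<Rightarrow> complex fps" where
  "lin_fac j = fps_const (of_nat j) * (fps_const (of_nat j) - fps_X)"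

definition inv_lin_fac :: "nat \<Rightarrow> complex fps" where
  "inv_lin_fac j = Abs_fps (\<lambda>n. 1 / of_nat j ^ (n + 2))"

lemma inv_lin_fac_mult:
  assumes "j > 0"
  shows "inv_lin_fac j * lin_fac j = 1"
proof -
  define g :: "complex fps" where "g = Abs_fps (\<lambda>n. 1 / of_nat j ^ (n + 1))"
  have "(fps_const (of_nat j) - fps_X) * g = 1"
  proof (rule fps_ext)
    fix n
    show "((fps_const (of_nat j) - fps_X) * g) $ n = (1 :: complex fps) $ n"
      using assms by (cases n) (auto simp: g_def algebra_simps)
  qed
  moreover have "inv_lin_fac j = fps_const (1 / of_nat j) * g"
    by (rule fps_ext) (simp add: inv_lin_fac_def g_def)
  ultimately show ?thesis
    using assms by (simp add: lin_fac_def algebra_simps)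
qed

lemma pochhammer_one_minus_X_fact:
  "pochhammer (1 - fps_X :: complex fps) m * fps_const (fact m) = (\<Prod>j\<in>{0<..m}. lin_fac j)"
proof (induction m)
  case 0
  then show ?case by simp
next
  case (Suc m)
  have "{0<..Suc m} = insert (Suc m) {0<..m}" by auto
  moreover have "fps_const (fact (Suc m) :: complex) = fps_const (fact m) * of_nat (Suc m)"
    by (simp add: mult.commute flip: fps_of_nat)
  moreover have "(1 - fps_X + of_nat m) * of_nat (Suc m) = lin_fac (Suc m)"
    by (simp add: lin_fac_def algebra_simps flip: fps_of_nat)
  ultimately show ?case
    using Suc by (simp add: pochhammer_Suc mult_ac)
qed

lemma fps_prod_nth_0: "(\<Prod>i\<in>A. f i) $ 0 = (\<Prod>i\<in>A. f i $ 0)"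
  by (induction A rule: infinite_finite_induct) auto

definition gen_factor :: "nat \<Rightarrow> mps" where
  "gen_factor j = mY * mconst (1 / of_nat j) + mZ * embX (inv_lin_fac j)"

definition gen_prod :: "nat \<Rightarrow> mps" where
  "gen_prod m = (\<Prod>j\<in>{0<..<m}. 1 + gen_factor j)"

definition ab_factor :: "nat \<Rightarrow> mps" where
  "ab_factor j = mZ + (of_nat j - mX) * (mX + mY) + (of_nat j - mX)\<^sup>2"

lemma one_plus_gen_factor_mult:
  assumes "j > 0"
  shows "(1 + gen_factor j) * embX (lin_fac j) = ab_factor j"
proof -
  have lin: "embX (lin_fac j) = of_nat j * (of_nat j - mX)"
    by (simp add: lin_fac_def embX_mult embX_diff embX_X embX_const flip: fps_of_nat)
  have "mconst (1 / of_nat j) * of_nat j = 1"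
    using assms by (simp flip: fps_of_nat)
  then have Y: "mconst (1 / of_nat j) * embX (lin_fac j) = of_nat j - mX"
    unfolding lin mult.assoc[symmetric] by simp
  have Z: "embX (inv_lin_fac j) * embX (lin_fac j) = 1"
    using inv_lin_fac_mult[OF assms] by (simp add: embX_1 flip: embX_mult)
  have "(1 + gen_factor j) * embX (lin_fac j)
      = embX (lin_fac j) + mY * (mconst (1 / of_nat j) * embX (lin_fac j))
        + mZ * (embX (inv_lin_fac j) * embX (lin_fac j))"
    unfolding gen_factor_def by (simp add: distrib_right add.assoc mult.assoc)
  also have "\<dots> = ab_factor j"
    unfolding Y Z unfolding lin ab_factor_def by (simp add: algebra_simps power2_eq_square)
  finally show ?thesis .
qed

lemma ab_poch_eq_gen_prod:
  assumes "m > 0"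
  shows "ab_poch m * embX (inverse (pochhammer (1 - fps_X) m * fps_const (fact m)))
       = (mZ - mX * mY) * (gen_prod m * embX (inv_lin_fac m))"
proof -
  define g :: "complex fps" where "g = pochhammer (1 - fps_X) m * fps_const (fact m)"
  define h where "h = (\<Prod>j\<in>{0<..<m}. lin_fac j)"
  have "{0<..m} = insert m {0<..<m}"
    using assms by auto
  then have g: "g = lin_fac m * h"
    by (simp add: g_def h_def pochhammer_one_minus_X_fact)
  have "g $ 0 \<noteq> 0"
    by (simp add: g_def pochhammer_one_minus_X_fact fps_prod_nth_0 lin_fac_def)
  then have "h * inverse g = inv_lin_fac m * g * inverse g"
    using inv_lin_fac_mult[OF assms] by (simp add: g algebra_simps)
  also have "\<dots> = inv_lin_fac m"
    using inverse_mult_eq_1'[OF \<open>g $ 0 \<noteq> 0\<close>] by (simp add: mult.assoc)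
  finally have h_inv: "h * inverse g = inv_lin_fac m" .
  have "{..<m} = insert 0 {0<..<m}"
    using assms by auto
  then have "ab_poch m = ab_factor 0 * (\<Prod>j\<in>{0<..<m}. ab_factor j)"
    by (simp add: ab_poch_def ab_factor_def)
  also have "(\<Prod>j\<in>{0<..<m}. ab_factor j) = (\<Prod>j\<in>{0<..<m}. (1 + gen_factor j) * embX (lin_fac j))"
    by (rule prod.cong) (auto simp: one_plus_gen_factor_mult)
  also have "\<dots> = gen_prod m * embX h"
    by (simp add: gen_prod_def h_def prod.distrib embX_prod)
  also have "ab_factor 0 = mZ - mX * mY"
    by (simp add: ab_factor_def algebra_simps power2_eq_square)
  finally have "ab_poch m = (mZ - mX * mY) * (gen_prod m * embX h)"
    by (simp add: mult.commute)
  then have "ab_poch m * embX (inverse g) = (mZ - mX * mY) * (gen_prod m * embX (h * inverse g))"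
    by (simp add: embX_mult mult.assoc)
  then show ?thesis
    unfolding h_inv unfolding g_def .
qed

definition height :: "nat list \<Rightarrow> nat" where
  "height ks = length (filter (\<lambda>k. 1 < k) ks)"

lemma height_snoc: "height (ks @ [k]) = height ks + (if 1 < k then 1 else 0)"
  by (simp add: height_def)

lemma height_le_length: "height ks \<le> length ks"
  by (simp add: height_def)

lemma length_plus_height_le_sum_list:
  "\<forall>k\<in>set ks. 0 < k \<Longrightarrow> length ks + height ks \<le> sum_list ks"
  by (induction ks) (auto simp: height_def)

text \<open>The indices of weight \<open>k\<close>, depth \<open>r\<close> and height \<open>h\<close> whose monomial
  \<open>X^(k-r-h) Y^(r-h) Z^h\<close> is \<open>X^a Y^b Z^c\<close>, i.e. \<open>k = a+b+2c\<close>, \<open>r = b+c\<close>, \<open>h = c\<close>.\<close>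
definition monomial_indices :: "nat \<Rightarrow> nat \<Rightarrow> nat \<Rightarrow> nat list set" where
  "monomial_indices a b c = {ks. (\<forall>k\<in>set ks. 0 < k) \<and> length ks = b + c \<and> height ks = c
                                 \<and> sum_list ks = a + b + 2 * c}"

lemma finite_monomial_indices: "finite (monomial_indices a b c)"
proof (rule finite_subset)
  show "monomial_indices a b c \<subseteq> {ks. set ks \<subseteq> {0..a + b + 2 * c} \<and> length ks = b + c}"
    by (auto simp: monomial_indices_def dest: member_le_sum_list)
qed (intro finite_lists_length_eq; simp)

lemma Nil_in_monomial_indices_iff: "[] \<in> monomial_indices a b c \<longleftrightarrow> a = 0 \<and> b = 0 \<and> c = 0"
  by (auto simp: monomial_indices_def height_def)

lemma monomial_indices_last_one:
  "{ks \<in> monomial_indices a b c. ks \<noteq> [] \<and> last ks = 1}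
     = (if 0 < b then (\<lambda>ks. ks @ [1]) ` monomial_indices a (b - 1) c else {})"
proof (intro equalityI subsetI)
  fix ks assume ks: "ks \<in> {ks \<in> monomial_indices a b c. ks \<noteq> [] \<and> last ks = 1}"
  then obtain ks' where ks': "ks = ks' @ [1]"
    by (metis (mono_tags, lifting) append_butlast_last_id mem_Collect_eq)
  with ks have "height ks' = c" "length ks' + 1 = b + c"
    by (auto simp: monomial_indices_def height_snoc)
  with height_le_length[of ks'] have "0 < b"
    by linarith
  with ks ks' have "ks' \<in> monomial_indices a (b - 1) c"
    by (auto simp: monomial_indices_def height_snoc)
  with ks' \<open>0 < b\<close> show "ks \<in> (if 0 < b then (\<lambda>ks. ks @ [1]) ` monomial_indices a (b - 1) c else {})"
    by simp
next
  fix ks assume "ks \<in> (if 0 < b then (\<lambda>ks. ks @ [1]) ` monomial_indices a (b - 1) c else {})"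
  then show "ks \<in> {ks \<in> monomial_indices a b c. ks \<noteq> [] \<and> last ks = 1}"
    by (auto simp: monomial_indices_def height_snoc split: if_splits)
qed

lemma monomial_indices_last_gt_one:
  "{ks \<in> monomial_indices a b c. ks \<noteq> [] \<and> 1 < last ks}
     = (if 0 < c then (\<lambda>(i, ks). ks @ [a - i + 2]) ` (SIGMA i:{..a}. monomial_indices i b (c - 1))
        else {})"
proof (intro equalityI subsetI)
  fix ks assume ks: "ks \<in> {ks \<in> monomial_indices a b c. ks \<noteq> [] \<and> 1 < last ks}"
  then obtain ks' k where ks': "ks = ks' @ [k]" and "1 < k"
    by (metis (mono_tags, lifting) append_butlast_last_id mem_Collect_eq)
  with ks have pos: "\<forall>k\<in>set ks'. 0 < k" and "height ks' + 1 = c"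
    and "length ks' + 1 = b + c" and sum: "sum_list ks' + k = a + b + 2 * c"
    by (auto simp: monomial_indices_def height_snoc)
  moreover note length_plus_height_le_sum_list[OF pos]
  ultimately have "0 < c" and "k \<le> a + 2"
    by linarith+
  define i where "i = a + 2 - k"
  have "i \<le> a" "k = a - i + 2"
    using \<open>k \<le> a + 2\<close> \<open>1 < k\<close> by (auto simp: i_def)
  moreover have "ks' \<in> monomial_indices i b (c - 1)"
    using pos \<open>height ks' + 1 = c\<close> \<open>length ks' + 1 = b + c\<close> sum \<open>k = a - i + 2\<close> \<open>i \<le> a\<close>
    by (auto simp: monomial_indices_def)
  ultimately show "ks \<in> (if 0 < c then (\<lambda>(i, ks). ks @ [a - i + 2]) `
                           (SIGMA i:{..a}. monomial_indices i b (c - 1)) else {})"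
    using ks' \<open>0 < c\<close> by (auto intro!: image_eqI[where x = "(i, ks')"])
next
  fix ks assume "ks \<in> (if 0 < c then (\<lambda>(i, ks). ks @ [a - i + 2]) `
                         (SIGMA i:{..a}. monomial_indices i b (c - 1)) else {})"
  then show "ks \<in> {ks \<in> monomial_indices a b c. ks \<noteq> [] \<and> 1 < last ks}"
    by (auto simp: monomial_indices_def height_snoc split: if_splits)
qed

lemma sum_monomial_indices_last_one:
  "(\<Sum>ks\<in>{ks \<in> monomial_indices a b c. ks \<noteq> [] \<and> last ks = 1}. f ks)
     = (if 0 < b then \<Sum>ks\<in>monomial_indices a (b - 1) c. f (ks @ [1]) else 0)"
  unfolding monomial_indices_last_one by (simp add: sum.reindex inj_on_def)

lemma sum_monomial_indices_last_gt_one: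
  "(\<Sum>ks\<in>{ks \<in> monomial_indices a b c. ks \<noteq> [] \<and> 1 < last ks}. f ks)
     = (if 0 < c then \<Sum>i\<le>a. \<Sum>ks\<in>monomial_indices i b (c - 1). f (ks @ [a - i + 2]) else 0)"
proof -
  have "inj_on (\<lambda>(i, ks). ks @ [a - i + 2]) (SIGMA i:{..a}. monomial_indices i b (c - 1))"
    by (auto simp: inj_on_def)
  then show ?thesis
    unfolding monomial_indices_last_gt_one
    by (simp add: sum.reindex sum.Sigma finite_monomial_indices case_prod_unfold)
qed

lemma sum_monomial_indices_nonempty:
  "(\<Sum>ks\<in>{ks \<in> monomial_indices a b c. ks \<noteq> []}. f ks)
     = (if 0 < b then \<Sum>ks\<in>monomial_indices a (b - 1) c. f (ks @ [1]) else 0)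
     + (if 0 < c then \<Sum>i\<le>a. \<Sum>ks\<in>monomial_indices i b (c - 1). f (ks @ [a - i + 2]) else 0)"
proof -
  have "last ks \<noteq> 0" if "ks \<in> monomial_indices a b c" "ks \<noteq> []" for ks
    using that by (auto simp: monomial_indices_def)
  then have last_cases: "{ks \<in> monomial_indices a b c. ks \<noteq> []}
      = {ks \<in> monomial_indices a b c. ks \<noteq> [] \<and> last ks = 1}
        \<union> {ks \<in> monomial_indices a b c. ks \<noteq> [] \<and> 1 < last ks}"
    by force
  have "(\<Sum>ks\<in>{ks \<in> monomial_indices a b c. ks \<noteq> []}. f ks)
      = (\<Sum>ks\<in>{ks \<in> monomial_indices a b c. ks \<noteq> [] \<and> last ks = 1}. f ks)
        + (\<Sum>ks\<in>{ks \<in> monomial_indices a b c. ks \<noteq> [] \<and> 1 < last ks}. f ks)"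
    unfolding last_cases by (rule sum.union_disjoint) (auto simp: finite_monomial_indices)
  then show ?thesis
    by (simp only: sum_monomial_indices_last_one sum_monomial_indices_last_gt_one)
qed

lemma mem_I0_iff:
  "ks \<in> I0 k r h \<longleftrightarrow> (\<forall>x\<in>set ks. 0 < x) \<and> length ks = r \<and> height ks = h \<and> sum_list ks = k
                       \<and> 1 < ks ! (r - 1)"
  by (auto simp: I0_def height_def length_filter_conv_card all_set_conv_all_nth)

lemma I0_weight_bounds:
  assumes "ks \<in> I0 k r h"
  shows "r + h \<le> k \<and> h \<le> r"
  using assms length_plus_height_le_sum_list[of ks] height_le_length[of ks]
  by (auto simp: mem_I0_iff)

lemma I0_eq_monomial_indices:
  "I0 (a + b + 2 * c + 2) (b + c + 1) (c + 1)
     = {ks \<in> monomial_indices a b (c + 1). ks \<noteq> [] \<and> 1 < last ks}"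
  by (auto simp: mem_I0_iff monomial_indices_def last_conv_nth simp flip: length_greater_0_conv)

section \<open>Truncated multiple zeta values\<close>

definition incr_lists :: "nat \<Rightarrow> nat \<Rightarrow> nat list set" where
  "incr_lists N r = {ms. length ms = r \<and> sorted_wrt (<) ms \<and> set ms \<subseteq> {0<..<N}}"

lemma finite_incr_lists: "finite (incr_lists N r)"
proof (rule finite_subset)
  show "incr_lists N r \<subseteq> {ms. set ms \<subseteq> {0..<N} \<and> length ms = r}"
    by (auto simp: incr_lists_def)
qed (intro finite_lists_length_eq; simp)

lemma incr_lists_0: "incr_lists N 0 = {[]}"
  by (auto simp: incr_lists_def)

lemma snoc_in_incr_lists_iff:
  "ms @ [j] \<in> incr_lists N (Suc r) \<longleftrightarrow> 0 < j \<and> j < N \<and> ms \<in> incr_lists j r"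
  unfolding incr_lists_def by (auto simp: sorted_wrt_append)

lemma incr_lists_Suc:
  "incr_lists N (Suc r) = (\<lambda>(j, ms). ms @ [j]) ` (SIGMA j:{0<..<N}. incr_lists j r)"
proof (intro equalityI subsetI)
  fix ms assume ms: "ms \<in> incr_lists N (Suc r)"
  then obtain ms' j where ms': "ms = ms' @ [j]"
    by (cases ms rule: rev_cases) (auto simp: incr_lists_def)
  with ms have "(j, ms') \<in> (SIGMA j:{0<..<N}. incr_lists j r)"
    by (simp add: snoc_in_incr_lists_iff)
  with ms' show "ms \<in> (\<lambda>(j, ms). ms @ [j]) ` (SIGMA j:{0<..<N}. incr_lists j r)"
    by (auto intro!: image_eqI)
next
  fix ms assume "ms \<in> (\<lambda>(j, ms). ms @ [j]) ` (SIGMA j:{0<..<N}. incr_lists j r)"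
  then show "ms \<in> incr_lists N (Suc r)"
    by (auto simp: snoc_in_incr_lists_iff)
qed

lemma sum_incr_lists_Suc:
  "(\<Sum>ms\<in>incr_lists N (Suc r). f ms) = (\<Sum>j\<in>{0<..<N}. \<Sum>ms\<in>incr_lists j r. f (ms @ [j]))"
proof -
  have "inj_on (\<lambda>(j, ms). ms @ [j]) (SIGMA j:{0<..<N}. incr_lists j r)"
    by (auto simp: inj_on_def)
  then show ?thesis
    unfolding incr_lists_Suc
    by (simp add: sum.reindex sum.Sigma finite_incr_lists case_prod_unfold)
qed

definition mzv_term :: "nat list \<Rightarrow> nat list \<Rightarrow> complex" where
  "mzv_term ks ms = (\<Prod>i<length ks. 1 / of_nat (ms ! i) ^ (ks ! i))"

lemma mzv_term_snoc:
  assumes "length ms = length ks"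
  shows "mzv_term (ks @ [k]) (ms @ [j]) = mzv_term ks ms / of_nat j ^ k"
proof -
  have "(\<Prod>i<length ks. 1 / of_nat ((ms @ [j]) ! i) ^ ((ks @ [k]) ! i))
      = (mzv_term ks ms :: complex)"
    unfolding mzv_term_def by (rule prod.cong) (auto simp: nth_append assms)
  then show ?thesis
    by (simp add: mzv_term_def assms nth_append)
qed

definition zeta_lt :: "nat \<Rightarrow> nat list \<Rightarrow> complex" where
  "zeta_lt m ks = (\<Sum>ms\<in>incr_lists m (length ks). mzv_term ks ms)"

lemma zeta_lt_Nil: "zeta_lt m [] = 1"
  by (simp add: zeta_lt_def incr_lists_0 mzv_term_def)

lemma sum_mzv_term_snoc:
  "(\<Sum>ms\<in>incr_lists N (Suc (length ks)). mzv_term (ks @ [k]) ms * f (last ms))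
     = (\<Sum>j\<in>{0<..<N}. f j * (zeta_lt j ks / of_nat j ^ k))"
proof -
  have "(\<Sum>ms\<in>incr_lists N (Suc (length ks)). mzv_term (ks @ [k]) ms * f (last ms))
      = (\<Sum>j\<in>{0<..<N}. \<Sum>ms\<in>incr_lists j (length ks). mzv_term ks ms / of_nat j ^ k * f j)"
    unfolding sum_incr_lists_Suc by (intro sum.cong refl) (simp add: mzv_term_snoc incr_lists_def)
  then show ?thesis
    by (simp add: zeta_lt_def sum_distrib_left sum_divide_distrib mult.commute)
qed

lemma zeta_lt_snoc: "zeta_lt m (ks @ [k]) = (\<Sum>j\<in>{0<..<m}. zeta_lt j ks / of_nat j ^ k)"
  using sum_mzv_term_snoc[where N = m and f = "\<lambda>_. 1"] by (simp add: zeta_lt_def)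

lemma zeta_lt_Suc:
  assumes "0 < m"
  shows "zeta_lt (Suc m) ks
       = zeta_lt m ks + (if ks = [] then 0 else zeta_lt m (butlast ks) / of_nat m ^ last ks)"
proof (cases ks rule: rev_cases)
  case Nil
  then show ?thesis by (simp add: zeta_lt_Nil)
next
  case (snoc ks' k)
  have "{0<..<Suc m} = insert m {0<..<m}"
    using assms by auto
  then show ?thesis
    by (simp add: snoc zeta_lt_snoc)
qed

lemma zeta_lt_le_one:
  assumes "m \<le> 1"
  shows "zeta_lt m ks = (if ks = [] then 1 else 0)"
proof -
  have "{0<..<m} = {}"
    using assms by auto
  then show ?thesis
    by (cases ks rule: rev_cases) (auto simp: zeta_lt_Nil zeta_lt_snoc)
qed

lemma LiN_snoc:
  "LiN N (ks @ [k]) z = (\<Sum>j\<in>{0<..<N}. cfac N j z * (zeta_lt j ks / of_nat j ^ k))"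
proof -
  have "LiN N (ks @ [k]) z
      = (\<Sum>ms\<in>incr_lists N (Suc (length ks)). mzv_term (ks @ [k]) ms * cfac N (last ms) z)"
    by (simp add: LiN_def incr_lists_def mzv_term_def)
  also have "\<dots> = (\<Sum>j\<in>{0<..<N}. cfac N j z * (zeta_lt j ks / of_nat j ^ k))"
    by (rule sum_mzv_term_snoc[where f = "\<lambda>j. cfac N j z"])
  finally show ?thesis .
qed

lemma nth_mult_embX: "(F * embX e) $ c $ b $ a = (\<Sum>i\<le>a. F $ c $ b $ i * e $ (a - i))"
  unfolding embX_def fps_mult_right_const_nth by (simp add: fps_mult_nth atMost_atLeast0)

lemma nth_mult_mY_mconst:
  "(F * (mY * mconst d)) $ c $ b $ a = (if b = 0 then 0 else F $ c $ (b - 1) $ a * d)"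
proof -
  have "F * (mY * mconst d) = F * fps_const (fps_X * fps_const (fps_const d))"
    by (simp add: mY_def)
  then have "(F * (mY * mconst d)) $ c = F $ c * (fps_X * fps_const (fps_const d))"
    by (simp only: fps_mult_right_const_nth)
  also have "\<dots> = (fps_X * F $ c) * fps_const (fps_const d)"
    by (simp add: mult_ac)
  finally show ?thesis
    by simp
qed

lemma nth_mult_mZ_embX:
  "(F * (mZ * embX e)) $ c $ b $ a
     = (if c = 0 then 0 else \<Sum>i\<le>a. F $ (c - 1) $ b $ i * e $ (a - i))"
proof -
  have "F * (mZ * embX e) = (fps_X * F) * embX e"
    by (simp add: mZ_def mult_ac)
  then show ?thesis
    by (simp only: nth_mult_embX) (simp add: fps_X_mult_nth)
qed

lemma gen_prod_Suc:
  assumes "0 < m"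
  shows "gen_prod (Suc m)
       = gen_prod m + gen_prod m * (mY * mconst (1 / of_nat m)) + gen_prod m * (mZ * embX (inv_lin_fac m))"
proof -
  have "{0<..<Suc m} = insert m {0<..<m}"
    using assms by auto
  then show ?thesis
    by (simp add: gen_prod_def gen_factor_def algebra_simps)
qed

lemma gen_prod_nth: "gen_prod m $ c $ b $ a = (\<Sum>ks\<in>monomial_indices a b c. zeta_lt m ks)"
proof (induction m arbitrary: a b c rule: less_induct)
  case (less m)
  show ?case
  proof (cases "m \<le> 1")
    case True
    then have "{0<..<m} = {}"
      by auto
    then have "gen_prod m = 1"
      by (simp add: gen_prod_def)
    with True show ?thesis
      by (simp add: zeta_lt_le_one sum.delta finite_monomial_indices Nil_in_monomial_indices_iff)
  next
    case False
    then obtain n where m: "m = Suc n" and "0 < n"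
      by (cases m) auto
    have IH: "gen_prod n $ c' $ b' $ a' = (\<Sum>ks\<in>monomial_indices a' b' c'. zeta_lt n ks)" for a' b' c'
      using less.IH m by simp
    define f where "f ks = zeta_lt n (butlast ks) / of_nat n ^ last ks" for ks
    have "gen_prod m $ c $ b $ a
        = (\<Sum>ks\<in>monomial_indices a b c. zeta_lt n ks)
          + (if 0 < b then \<Sum>ks\<in>monomial_indices a (b - 1) c. f (ks @ [1]) else 0)
          + (if 0 < c then \<Sum>i\<le>a. \<Sum>ks\<in>monomial_indices i b (c - 1). f (ks @ [a - i + 2]) else 0)"
      unfolding m gen_prod_Suc[OF \<open>0 < n\<close>] fps_add_nth nth_mult_mY_mconst nth_mult_mZ_embX
      by (simp add: IH f_def inv_lin_fac_def sum_distrib_right divide_inverse)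
    also have "\<dots> = (\<Sum>ks\<in>monomial_indices a b c. zeta_lt n ks)
        + (\<Sum>ks\<in>{ks \<in> monomial_indices a b c. ks \<noteq> []}. f ks)"
      by (simp only: sum_monomial_indices_nonempty add.assoc)
    also have "\<dots> = (\<Sum>ks\<in>monomial_indices a b c. zeta_lt n ks + (if ks \<noteq> [] then f ks else 0))"
      by (simp add: sum.distrib sum.inter_filter finite_monomial_indices)
    also have "\<dots> = (\<Sum>ks\<in>monomial_indices a b c. zeta_lt m ks)"
      by (intro sum.cong refl) (simp add: m zeta_lt_Suc[OF \<open>0 < n\<close>] f_def)
    finally show ?thesis .
  qed
qed

lemma G0_eq_sum_zeta_lt:
  "G0 N (a + b + 2 * c + 2) (b + c + 1) (c + 1) z
     = (\<Sum>j\<in>{0<..<N}. cfac N j z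
          * (\<Sum>i\<le>a. (\<Sum>ks\<in>monomial_indices i b c. zeta_lt j ks) / of_nat j ^ (a - i + 2)))"
proof -
  have "G0 N (a + b + 2 * c + 2) (b + c + 1) (c + 1) z
      = (\<Sum>i\<le>a. \<Sum>ks\<in>monomial_indices i b c. LiN N (ks @ [a - i + 2]) z)"
    unfolding G0_def I0_eq_monomial_indices sum_monomial_indices_last_gt_one by simp
  also have "\<dots> = (\<Sum>i\<le>a. \<Sum>ks\<in>monomial_indices i b c. \<Sum>j\<in>{0<..<N}.
                     cfac N j z * (zeta_lt j ks / of_nat j ^ (a - i + 2)))"
    by (simp only: LiN_snoc)
  also have "\<dots> = (\<Sum>i\<le>a. \<Sum>j\<in>{0<..<N}. \<Sum>ks\<in>monomial_indices i b c.
                     cfac N j z * (zeta_lt j ks / of_nat j ^ (a - i + 2)))"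
    by (simp only: sum.swap[of _ "{0<..<N}"])
  also have "\<dots> = (\<Sum>j\<in>{0<..<N}. \<Sum>i\<le>a. \<Sum>ks\<in>monomial_indices i b c.
                     cfac N j z * (zeta_lt j ks / of_nat j ^ (a - i + 2)))"
    by (rule sum.swap)
  finally show ?thesis
    by (simp add: sum_distrib_left sum_divide_distrib)
qed

lemma Phi0_nth: "Phi0 N z $ c $ b $ a = G0 N (a + b + 2 * c + 2) (b + c + 1) (c + 1) z"
proof -
  have "{(k, r, h). k > 0 \<and> r > 0 \<and> h > 0 \<and> int k - int r - int h = int a
          \<and> int r - int h = int b \<and> int h - 1 = int c} = {(a + b + 2 * c + 2, b + c + 1, c + 1)}"
    by auto
  then show ?thesis
    by (simp add: Phi0_def)
qed

lemma Phi0_eq_sum_gen_prod: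
  "Phi0 N z = (\<Sum>j\<in>{0<..<N}. mconst (cfac N j z) * (gen_prod j * embX (inv_lin_fac j)))"
proof (intro fps_ext)
  fix c b a
  show "Phi0 N z $ c $ b $ a
      = (\<Sum>j\<in>{0<..<N}. mconst (cfac N j z) * (gen_prod j * embX (inv_lin_fac j))) $ c $ b $ a"
    unfolding Phi0_nth G0_eq_sum_zeta_lt fps_sum_nth fps_mult_left_const_nth nth_mult_embX gen_prod_nth
    by (simp add: inv_lin_fac_def divide_inverse)
qed

lemma F21N_minus_one:
  assumes "N > 0"
  shows "F21N N z - 1
       = (\<Sum>m\<in>{0<..<N}. (mZ - mX * mY) * (gen_prod m * embX (inv_lin_fac m)) * mconst (cfac N m z))"
proof -
  have "{..<N} = insert 0 {0<..<N}"
    using assms by auto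
  then have "F21N N z - 1 = (\<Sum>m\<in>{0<..<N}.
      ab_poch m * embX (inverse (pochhammer (1 - fps_X) m * fps_const (fact m))) * mconst (cfac N m z))"
    by (simp add: F21N_def ab_poch_def cfac_def embX_def mult.assoc)
  also have "\<dots> = (\<Sum>m\<in>{0<..<N}.
      (mZ - mX * mY) * (gen_prod m * embX (inv_lin_fac m)) * mconst (cfac N m z))"
    by (intro sum.cong refl) (simp add: ab_poch_eq_gen_prod)
  finally show ?thesis .
qed

theorem theorem5p2:
  fixes N :: nat and z :: complex
  assumes "N > 0" and "z \<noteq> 0"
  shows "(\<forall>k r h. G0 N k r h z \<noteq> 0 \<longrightarrow> r + h \<le> k \<and> h \<le> r)
     \<and> (mZ - mX * mY) * Phi0 N z = F21N N z - 1"
proof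
  show "\<forall>k r h. G0 N k r h z \<noteq> 0 \<longrightarrow> r + h \<le> k \<and> h \<le> r"
  proof (intro allI impI)
    fix k r h
    assume "G0 N k r h z \<noteq> 0"
    then have "I0 k r h \<noteq> {}"
      by (auto simp: G0_def)
    then obtain ks where "ks \<in> I0 k r h"
      by blast
    then show "r + h \<le> k \<and> h \<le> r"
      by (rule I0_weight_bounds)
  qed
  show "(mZ - mX * mY) * Phi0 N z = F21N N z - 1"
    by (simp add: F21N_minus_one[OF \<open>N > 0\<close>] Phi0_eq_sum_gen_prod sum_distrib_left mult_ac)
qed

end
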